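(* Let $(X_n)_{n\in\mathbb{N}}$ be i.i.d. real random variables with distribution function $F$ and survival function $\bar F(x)=\mathbb{P}(X_1>x)$, with $\bar F(x)=x^{-\alpha}L(x)$ for all $x>x_0$, where $x_0>0$, $\alpha>0$ and $L$ is slowly varying. Let $X_{(n)}=\max_{1\le i\le n}X_i$, $a_n=F^{\leftarrow}(1-1/n)$ and, for $n\ge2$, $Z_n=(X_{(n)}/a_n)^{\alpha/\log n}$ (on $\{X_{(n)}>0\}$). Then for every $x\ge 1$, \[ \limsup_{n\to\infty}\frac{1}{\log n}\log\mathbb{P}(Z_n>x)\le -\log x. \]
   Context: A function $L:(0,\infty)\to(0,\infty)$ is slowly varying if $\lim_{x\to\infty}L(tx)/L(x)=1$ for all $t>0$. $F^{\leftarrow}(u)=\inf\{x\in\mathbb{R}: F(x)\ge u\}$. Note $\{Z_n>x\}=\{X_{(n)}>a_n x^{\log n/\alpha}\}$ for $x\ge1$ once $a_n>0$. *)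

theory Defs
  imports "HOL-Probability.Probability"
begin

definition slowly_varying :: "(real \<Rightarrow> real) \<Rightarrow> bool" where
  "slowly_varying L \<longleftrightarrow> (\<forall>x>0. L x > 0) \<and>
     (\<forall>t>0. ((\<lambda>x. L (t * x) / L x) \<longlongrightarrow> 1) at_top)"

definition gen_inverse :: "(real \<Rightarrow> real) \<Rightarrow> real \<Rightarrow> real" where
  "gen_inverse F u = Inf {x. F x \<ge> u}"

definition lnE :: "real \<Rightarrow> ereal" where
  "lnE p = (if p \<le> 0 then -\<infinity> else ereal (ln p))"

end

theory Submission
  imports Defs
begin

(* Write G for the survival function of X 1 and a n for its (1 - 1/n)-quantile, so that
   G (a n) <= 1/n.  The event Z n > x forces the maximum above l * a n with l = x^(log n / alpha),
   so by the union bound its probability is at most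
   n G (l a n) <= G (l a n) / G (a n).  Regular variation yields the Potter-type bound
   G (l y) <= 2^beta l^(-beta) G y for every beta < alpha, l >= 1 and large y; with beta = theta alpha
   the probability is O(n^(-theta log x)) for every theta < 1, and theta tends to 1. *)

lemma antitone_doubling_powr_bound:
  fixes G :: "real \<Rightarrow> real" and \<beta> Y y l :: real
  assumes antimono: "\<And>s t. s \<le> t \<Longrightarrow> G t \<le> G s" and nonneg: "\<And>t. G t \<ge> 0"
    and "\<beta> \<ge> 0" and "Y > 0"
    and doubling: "\<And>y. y \<ge> Y \<Longrightarrow> G (2 * y) \<le> 2 powr (-\<beta>) * G y"
    and "y \<ge> Y" and "l \<ge> 1"
  shows "G (l * y) \<le> 2 powr \<beta> * l powr (-\<beta>) * G y"
proof -
  have iterate: "G (2 ^ k * y) \<le> 2 powr (-\<beta> * k) * G y" for k :: nat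
  proof (induction k)
    case 0
    show ?case by simp
  next
    case (Suc k)
    have "y \<le> 2 ^ k * y"
      using \<open>y \<ge> Y\<close> \<open>Y > 0\<close> by simp
    then have "Y \<le> 2 ^ k * y"
      using \<open>y \<ge> Y\<close> by linarith
    then have "G (2 ^ Suc k * y) \<le> 2 powr (-\<beta>) * G (2 ^ k * y)"
      using doubling[of "2 ^ k * y"] by (simp add: mult.assoc)
    also have "\<dots> \<le> 2 powr (-\<beta>) * (2 powr (-\<beta> * k) * G y)"
      using Suc.IH by (simp add: mult_left_mono)
    also have "\<dots> = 2 powr (-\<beta> * Suc k) * G y"
      by (simp add: powr_add[symmetric] algebra_simps)
    finally show ?case .
  qed
  define k where "k = nat \<lfloor>log 2 l\<rfloor>"
  have "\<lfloor>log 2 l\<rfloor> \<ge> 0" using \<open>l \<ge> 1\<close> by simp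
  then have "2 powr k \<le> l" "l < 2 powr (k + 1)"
    using floor_log_eq_powr_iff[of l 2 "\<lfloor>log 2 l\<rfloor>"] \<open>l \<ge> 1\<close> by (simp_all add: k_def add.commute)
  have "G (l * y) \<le> G (2 ^ k * y)"
    using \<open>2 powr k \<le> l\<close> \<open>y \<ge> Y\<close> \<open>Y > 0\<close> by (intro antimono) (simp add: powr_realpow)
  also have "\<dots> \<le> 2 powr (-\<beta> * k) * G y" by (rule iterate)
  also have "2 powr (-\<beta> * k) = 2 powr \<beta> * (2 powr (k + 1)) powr (-\<beta>)"
    by (simp add: powr_powr powr_add[symmetric] algebra_simps)
  also have "\<dots> \<le> 2 powr \<beta> * l powr (-\<beta>)"
    using \<open>l < 2 powr (k + 1)\<close> \<open>l \<ge> 1\<close> \<open>\<beta> \<ge> 0\<close>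
    by (intro mult_left_mono powr_mono2') auto
  finally show ?thesis using nonneg[of y] by (simp add: mult_right_mono)
qed

lemma regularly_varying_doubling_bound:
  fixes G L :: "real \<Rightarrow> real" and \<alpha> \<beta> T :: real
  assumes "slowly_varying L" and G: "\<And>t. t > T \<Longrightarrow> G t = t powr (-\<alpha>) * L t"
    and "\<beta> < \<alpha>"
  obtains Y where "Y > 0" "Y > T" "\<And>y. y \<ge> Y \<Longrightarrow> G (2 * y) \<le> 2 powr (-\<beta>) * G y"
proof -
  have L_pos: "L t > 0" if "t > 0" for t
    using \<open>slowly_varying L\<close> that unfolding slowly_varying_def by blast
  have "((\<lambda>y. L (2 * y) / L y) \<longlongrightarrow> 1) at_top"
    using \<open>slowly_varying L\<close> unfolding slowly_varying_def by simp
  moreover have "1 < (2::real) powr (\<alpha> - \<beta>)"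
    using \<open>\<beta> < \<alpha>\<close> by simp
  ultimately have "eventually (\<lambda>y. L (2 * y) / L y < 2 powr (\<alpha> - \<beta>)) at_top"
    by (rule order_tendstoD)
  then obtain Y0 where Y0: "\<And>y. y \<ge> Y0 \<Longrightarrow> L (2 * y) / L y < 2 powr (\<alpha> - \<beta>)"
    unfolding eventually_at_top_linorder by blast
  define Y where "Y = max Y0 (\<bar>T\<bar> + 1)"
  have "G (2 * y) \<le> 2 powr (-\<beta>) * G y" if "y \<ge> Y" for y
  proof -
    have "y > 0" "y > T" "2 * y > T"
      using that unfolding Y_def by auto
    have "L (2 * y) \<le> 2 powr (\<alpha> - \<beta>) * L y"
      using Y0[of y] L_pos[OF \<open>y > 0\<close>] \<open>y \<ge> Y\<close> unfolding Y_def
      by (simp add: pos_divide_less_eq)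
    then have "(2 * y) powr (-\<alpha>) * L (2 * y) \<le> (2 * y) powr (-\<alpha>) * (2 powr (\<alpha> - \<beta>) * L y)"
      by (simp add: mult_left_mono)
    also have "\<dots> = 2 powr (-\<beta>) * (y powr (-\<alpha>) * L y)"
      using \<open>y > 0\<close> by (simp add: powr_mult powr_add[symmetric])
    finally show ?thesis
      using G \<open>y > T\<close> \<open>2 * y > T\<close> by simp
  qed
  moreover have "Y > 0" "Y > T"
    unfolding Y_def by auto
  ultimately show ?thesis
    using that by blast
qed

lemma (in real_distribution) measure_greaterThan_eq_1_minus_cdf:
  "measure M {t<..} = 1 - cdf M t"
proof -
  have "{t<..} = space M - {..t}" by auto
  then show ?thesis
    using prob_compl[of "{..t}"] by (simp add: cdf_def)
qed

lemma (in real_distribution) cdf_superlevel_set_nonempty: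
  assumes "u < 1"
  shows "{x. u \<le> cdf M x} \<noteq> {}"
proof -
  have "eventually (\<lambda>x. u < cdf M x) at_top"
    using cdf_lim_at_top_prob \<open>u < 1\<close> by (rule order_tendstoD)
  then obtain z where "u < cdf M z"
    by (auto simp: eventually_at_top_linorder)
  then have "z \<in> {x. u \<le> cdf M x}"
    by simp
  then show ?thesis
    by blast
qed

lemma (in real_distribution) le_gen_inverse_cdf:
  assumes "cdf M y < u" and "u < 1"
  shows "y \<le> gen_inverse (cdf M) u"
  unfolding gen_inverse_def
proof (rule cInf_greatest[OF cdf_superlevel_set_nonempty[OF \<open>u < 1\<close>]])
  fix x assume "x \<in> {x. u \<le> cdf M x}"
  then have "cdf M y < cdf M x"
    using \<open>cdf M y < u\<close> by simp
  then show "y \<le> x"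
    using cdf_nondecreasing[of x y] by linarith
qed

lemma (in real_distribution) cdf_gen_inverse_ge:
  assumes "u < 1"
  shows "u \<le> cdf M (gen_inverse (cdf M) u)"
proof -
  define S where "S = {x. u \<le> cdf M x}"
  have "eventually (\<lambda>x. u \<le> cdf M x) (at_right (Inf S))"
    using eventually_at_right_less
  proof (rule eventually_mono)
    fix x assume "Inf S < x"
    then obtain s where "s \<in> S" "s < x"
      using cInf_lessD[OF cdf_superlevel_set_nonempty[OF \<open>u < 1\<close>]] unfolding S_def by blast
    then show "u \<le> cdf M x"
      using cdf_nondecreasing[of s x] unfolding S_def by simp
  qed
  moreover have "(cdf M \<longlongrightarrow> cdf M (Inf S)) (at_right (Inf S))"
    using cdf_is_right_cont by (simp add: continuous_within)
  ultimately have "u \<le> cdf M (Inf S)"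
    using tendsto_lowerbound trivial_limit_at_right_real by blast
  then show ?thesis
    unfolding gen_inverse_def S_def .
qed

lemma (in real_distribution) regularly_varying_quantile_bound:
  fixes L :: "real \<Rightarrow> real" and \<alpha> \<beta> T :: real
  assumes "slowly_varying L" and tail: "\<And>t. t > T \<Longrightarrow> measure M {t<..} = t powr (-\<alpha>) * L t"
    and "0 \<le> \<beta>" and "\<beta> < \<alpha>"
  shows "eventually (\<lambda>n::nat. 0 < gen_inverse (cdf M) (1 - 1 / n) \<and>
           (\<forall>l\<ge>1. n * measure M {l * gen_inverse (cdf M) (1 - 1 / n)<..} \<le> 2 powr \<beta> * l powr (-\<beta>)))
         sequentially"
proof -
  define G where "G t = measure M {t<..}" for t
  have G_antimono: "G t \<le> G s" if "s \<le> t" for s t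
    unfolding G_def using that by (intro finite_measure_mono) auto
  have G_nonneg: "G t \<ge> 0" for t
    unfolding G_def by simp
  have G_pos: "G t > 0" if "t > T" "t > 0" for t
    using tail[OF \<open>t > T\<close>] \<open>slowly_varying L\<close> \<open>t > 0\<close>
    unfolding G_def slowly_varying_def by simp
  obtain Y where "Y > 0" "Y > T" and doubling: "\<And>y. y \<ge> Y \<Longrightarrow> G (2 * y) \<le> 2 powr (-\<beta>) * G y"
    using regularly_varying_doubling_bound[OF \<open>slowly_varying L\<close> _ \<open>\<beta> < \<alpha>\<close>, of T G]
    by (auto simp: G_def tail)
  have "eventually (\<lambda>n::nat. 1 / real n < G Y) sequentially"
    using order_tendstoD(2)[OF lim_1_over_n G_pos[OF \<open>Y > T\<close> \<open>Y > 0\<close>]] .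
  with eventually_gt_at_top[of 0] show ?thesis
  proof eventually_elim
    case (elim n)
    define a where "a = gen_inverse (cdf M) (1 - 1 / n)"
    have "1 - 1 / real n < 1" using \<open>n > 0\<close> by simp
    moreover have "cdf M Y < 1 - 1 / real n"
      using \<open>1 / real n < G Y\<close> measure_greaterThan_eq_1_minus_cdf by (simp add: G_def)
    ultimately have "Y \<le> a"
      unfolding a_def by (rule le_gen_inverse_cdf[rotated])
    have "G a \<le> 1 / n"
      using cdf_gen_inverse_ge[OF \<open>1 - 1 / real n < 1\<close>] measure_greaterThan_eq_1_minus_cdf
      by (simp add: G_def a_def)
    have "G a > 0"
      using \<open>Y \<le> a\<close> \<open>Y > 0\<close> \<open>Y > T\<close> by (intro G_pos) auto
    have "n * G (l * a) \<le> 2 powr \<beta> * l powr (-\<beta>)" if "l \<ge> 1" for l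
    proof -
      have "n \<le> 1 / G a"
        using \<open>G a \<le> 1 / n\<close> \<open>G a > 0\<close> \<open>n > 0\<close> by (simp add: field_simps)
      then have "n * G (l * a) \<le> 1 / G a * G (l * a)"
        using G_nonneg by (rule mult_right_mono)
      also have "\<dots> = G (l * a) / G a"
        by simp
      also have "\<dots> \<le> 2 powr \<beta> * l powr (-\<beta>)"
        using antitone_doubling_powr_bound[of G, OF G_antimono G_nonneg \<open>0 \<le> \<beta>\<close> \<open>Y > 0\<close> doubling \<open>Y \<le> a\<close> that]
          \<open>G a > 0\<close> by (simp add: pos_divide_le_eq)
      finally show ?thesis .
    qed
    then show ?case
      using \<open>Y \<le> a\<close> \<open>Y > 0\<close> by (simp add: a_def G_def)
  qed
qed

lemma (in finite_measure) measure_Max_greater_le_sum: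
  fixes X :: "'i \<Rightarrow> 'a \<Rightarrow> real"
  assumes "finite I" "I \<noteq> {}" "\<And>i. i \<in> I \<Longrightarrow> X i \<in> borel_measurable M"
  shows "measure M {\<omega> \<in> space M. t < Max ((\<lambda>i. X i \<omega>) ` I)}
           \<le> (\<Sum>i\<in>I. measure M {\<omega> \<in> space M. t < X i \<omega>})"
proof -
  have "{\<omega> \<in> space M. t < Max ((\<lambda>i. X i \<omega>) ` I)} = (\<Union>i\<in>I. {\<omega> \<in> space M. t < X i \<omega>})"
    using assms(1,2) by (auto simp: Max_gr_iff)
  moreover have "{\<omega> \<in> space M. t < X i \<omega>} \<in> sets M" if "i \<in> I" for i
    using assms(3)[OF that] by (simp add: borel_measurable_iff_greater)
  ultimately show ?thesis
    using assms(1) by (auto intro!: finite_measure_subadditive_finite)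
qed

lemma powr_inverse_mult_less:
  fixes a c m x :: real
  assumes "0 < m" "0 < a" "0 < c" "0 < x" "x < (m / a) powr c"
  shows "x powr (1 / c) * a < m"
proof (rule ccontr)
  assume "\<not> x powr (1 / c) * a < m"
  then have "m / a \<le> x powr (1 / c)"
    using \<open>0 < a\<close> by (simp add: divide_le_eq)
  with \<open>0 < m\<close> \<open>0 < a\<close> have "(m / a) powr c \<le> (x powr (1 / c)) powr c"
    using \<open>0 < c\<close> by (intro powr_mono2) simp_all
  also have "\<dots> = x"
    using \<open>0 < x\<close> \<open>0 < c\<close> by (simp add: powr_powr)
  finally show False
    using assms(5) by simp
qed

lemma limsup_lnE_div_ln_le:
  fixes p :: "nat \<Rightarrow> real" and C c :: real
  assumes "C > 0" and "eventually (\<lambda>n. p n \<le> C * real n powr (-c)) sequentially"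
  shows "limsup (\<lambda>n. lnE (p n) / ereal (ln (real n))) \<le> ereal (-c)"
proof -
  have "eventually (\<lambda>n. lnE (p n) / ereal (ln (real n)) \<le> ereal (ln C / ln (real n) - c)) sequentially"
    using assms(2) eventually_ge_at_top[of 2]
  proof eventually_elim
    case (elim n)
    then have "ln (real n) > 0" by simp
    show ?case
    proof (cases "p n > 0")
      case True
      then have "ln (p n) \<le> ln (C * real n powr (-c))"
        using elim by simp
      also have "\<dots> = ln C - c * ln (real n)"
        using elim \<open>C > 0\<close> by (simp add: ln_mult)
      finally have "ln (p n) \<le> ln C - c * ln (real n)" .
      then have "ln (p n) / ln (real n) \<le> ln C / ln (real n) - c"
        using \<open>ln (real n) > 0\<close> by (simp add: field_simps)
      then show ?thesis
        using True \<open>ln (real n) > 0\<close> by (simp add: lnE_def)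
    qed (use \<open>ln (real n) > 0\<close> in \<open>simp add: lnE_def\<close>)
  qed
  then have "limsup (\<lambda>n. lnE (p n) / ereal (ln (real n)))
               \<le> limsup (\<lambda>n. ereal (ln C / ln (real n) - c))"
    by (rule Limsup_mono)
  also have "\<dots> = ereal (-c)"
  proof (intro lim_imp_Limsup tendsto_ereal)
    have "filterlim (\<lambda>n. ln (real n)) at_infinity sequentially"
      by (intro filterlim_at_top_imp_at_infinity filterlim_compose[OF ln_at_top filterlim_real_sequentially])
    then have "(\<lambda>n. ln C / ln (real n)) \<longlonglongrightarrow> 0"
      by (intro tendsto_divide_0[OF tendsto_const])
    then show "(\<lambda>n. ln C / ln (real n) - c) \<longlonglongrightarrow> -c"
      using tendsto_diff[OF _ tendsto_const, of _ 0 sequentially c] by simp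
  qed simp
  finally show ?thesis .
qed

lemma (in prob_space) scaled_Max_tail_bound:
  fixes X :: "nat \<Rightarrow> 'a \<Rightarrow> real" and D :: "real measure" and L :: "real \<Rightarrow> real"
    and \<alpha> \<theta> x T :: real
  assumes X: "\<And>i. X i \<in> borel_measurable M" and distr: "\<And>i. distr M borel (X i) = D"
    and "slowly_varying L" and tail: "\<And>t. t > T \<Longrightarrow> measure D {t<..} = t powr (-\<alpha>) * L t"
    and "\<alpha> > 0" and "x \<ge> 1" and "0 \<le> \<theta>" and "\<theta> < 1"
  shows "eventually (\<lambda>n. measure M {\<omega> \<in> space M.
            Max ((\<lambda>i. X i \<omega>) ` {1..n}) > 0 \<and>
            (Max ((\<lambda>i. X i \<omega>) ` {1..n}) / gen_inverse (cdf D) (1 - 1 / real n))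
              powr (\<alpha> / ln (real n)) > x}
         \<le> 2 powr (\<theta> * \<alpha>) * real n powr (-(\<theta> * ln x))) sequentially"
proof -
  have "real_distribution D"
    using real_distribution_distr[OF X[of 1]] by (simp add: distr)
  then interpret D: real_distribution D .
  have tail_X: "measure M {\<omega> \<in> space M. t < X i \<omega>} = measure D {t<..}" for i t
  proof -
    have "X i -` {t<..} \<inter> space M = {\<omega> \<in> space M. t < X i \<omega>}"
      by auto
    then show ?thesis
      using measure_distr[OF X, of "{t<..}" i] by (simp add: distr)
  qed
  have "0 \<le> \<theta> * \<alpha>" "\<theta> * \<alpha> < \<alpha>"
    using \<open>0 \<le> \<theta>\<close> \<open>\<theta> < 1\<close> \<open>\<alpha> > 0\<close> by simp_all
  then have "eventually (\<lambda>n::nat. 0 < gen_inverse (cdf D) (1 - 1 / n) \<and>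
      (\<forall>l\<ge>1. n * measure D {l * gen_inverse (cdf D) (1 - 1 / n)<..}
                \<le> 2 powr (\<theta> * \<alpha>) * l powr (-(\<theta> * \<alpha>)))) sequentially"
    by (intro D.regularly_varying_quantile_bound[where T = T, OF \<open>slowly_varying L\<close>]) (simp_all add: tail)
  with eventually_ge_at_top[of 2]
  show ?thesis
  proof eventually_elim
    case (elim n)
    define a where "a = gen_inverse (cdf D) (1 - 1 / real n)"
    define l where "l = x powr (ln (real n) / \<alpha>)"
    have "ln (real n) > 0" "a > 0"
      using elim by (simp_all add: a_def)
    have "l \<ge> 1"
      unfolding l_def using \<open>x \<ge> 1\<close> \<open>ln (real n) > 0\<close> \<open>\<alpha> > 0\<close> by (simp add: ge_one_powr_ge_zero)
    let ?Max = "\<lambda>\<omega>. Max ((\<lambda>i. X i \<omega>) ` {1..n})"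
    have "{\<omega> \<in> space M. ?Max \<omega> > 0 \<and> (?Max \<omega> / a) powr (\<alpha> / ln (real n)) > x}
            \<subseteq> {\<omega> \<in> space M. l * a < ?Max \<omega>}"
      using powr_inverse_mult_less[OF _ \<open>a > 0\<close>, of _ "\<alpha> / ln (real n)" x]
        \<open>ln (real n) > 0\<close> \<open>\<alpha> > 0\<close> \<open>x \<ge> 1\<close> by (auto simp: l_def mult.commute)
    then have "measure M {\<omega> \<in> space M. ?Max \<omega> > 0 \<and> (?Max \<omega> / a) powr (\<alpha> / ln (real n)) > x}
            \<le> measure M {\<omega> \<in> space M. l * a < ?Max \<omega>}"
      by (intro finite_measure_mono) (use X in measurable)
    also have "\<dots> \<le> (\<Sum>i\<in>{1..n}. measure M {\<omega> \<in> space M. l * a < X i \<omega>})"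
      using \<open>n \<ge> 2\<close> X by (intro measure_Max_greater_le_sum) auto
    also have "\<dots> = n * measure D {l * a<..}"
      by (simp add: tail_X)
    also have "\<dots> \<le> 2 powr (\<theta> * \<alpha>) * l powr (-(\<theta> * \<alpha>))"
      using elim \<open>l \<ge> 1\<close> by (simp add: a_def)
    also have "l powr (-(\<theta> * \<alpha>)) = real n powr (-(\<theta> * ln x))"
      using \<open>x \<ge> 1\<close> \<open>n \<ge> 2\<close> \<open>\<alpha> > 0\<close> by (simp add: l_def powr_powr powr_def)
    finally show ?case
      by (simp add: a_def)
  qed
qed

theorem mainTheorem3:
  fixes M :: "'a measure" and X :: "nat \<Rightarrow> 'a \<Rightarrow> real"
    and F :: "real \<Rightarrow> real" and L :: "real \<Rightarrow> real"
    and \<alpha> x0 x :: real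
  assumes "prob_space M"
    and "prob_space.indep_vars M (\<lambda>_. borel) X UNIV"
    and "\<And>i. distr M borel (X i) = distr M borel (X 1)"
    and "\<And>t. F t = measure M {\<omega> \<in> space M. X 1 \<omega> \<le> t}"
    and "x0 > 0" and "\<alpha> > 0" and "slowly_varying L"
    and "\<And>t. t > x0 \<Longrightarrow> measure M {\<omega> \<in> space M. X 1 \<omega> > t} = t powr (-\<alpha>) * L t"
    and "x \<ge> 1"
  shows "limsup (\<lambda>n::nat.
            lnE (measure M {\<omega> \<in> space M.
                   Max ((\<lambda>i. X i \<omega>) ` {1..n}) > 0 \<and>
                   (Max ((\<lambda>i. X i \<omega>) ` {1..n}) / gen_inverse F (1 - 1 / real n))
                      powr (\<alpha> / ln (real n)) > x})
            / ereal (ln (real n)))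
         \<le> ereal (- ln x)"
proof -
  interpret prob_space M by fact
  have X: "X i \<in> borel_measurable M" for i
    using assms(2) unfolding indep_vars_def by simp
  define D where "D = distr M borel (X 1)"
  have F: "F = cdf D"
  proof
    fix t
    have "X 1 -` {..t} \<inter> space M = {\<omega> \<in> space M. X 1 \<omega> \<le> t}" by auto
    then show "F t = cdf D t"
      using measure_distr[OF X, of "{..t}" 1] by (simp add: assms(4) cdf_def D_def)
  qed
  have tail: "measure D {t<..} = t powr (-\<alpha>) * L t" if "t > x0" for t
  proof -
    have "X 1 -` {t<..} \<inter> space M = {\<omega> \<in> space M. X 1 \<omega> > t}" by auto
    then show ?thesis
      using measure_distr[OF X, of "{t<..}" 1] assms(8)[OF that] by (simp add: D_def)
  qed
  let ?limsup = "limsup (\<lambda>n::nat. lnE (measure M {\<omega> \<in> space M.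
            Max ((\<lambda>i. X i \<omega>) ` {1..n}) > 0 \<and>
            (Max ((\<lambda>i. X i \<omega>) ` {1..n}) / gen_inverse F (1 - 1 / real n))
              powr (\<alpha> / ln (real n)) > x}) / ereal (ln (real n)))"
  have "?limsup \<le> ereal (-(\<theta> * ln x))" if "0 < \<theta>" "\<theta> < 1" for \<theta>
    unfolding F using that assms(3,6,7,9) tail
    by (intro limsup_lnE_div_ln_le[OF _ scaled_Max_tail_bound[OF X]]) (simp_all add: D_def)
  then have "eventually (\<lambda>\<theta>. ?limsup \<le> ereal (-(\<theta> * ln x))) (at_left 1)"
    using eventually_at_left_real[of 0 1] by (auto elim: eventually_mono)
  moreover have "((\<lambda>\<theta>. ereal (-(\<theta> * ln x))) \<longlongrightarrow> ereal (-(1 * ln x))) (at_left 1)"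
    by (intro tendsto_intros)
  ultimately have "?limsup \<le> ereal (-(1 * ln x))"
    by (intro tendsto_lowerbound[OF _ _ trivial_limit_at_left_real])
  then show ?thesis
    by simp
qed

end
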